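(* For every integer $m\ge 4$, $$\lambda(C_3(T_{m-2,2}))<\frac{m-2}{2}+\frac{32}{(m-3)^2}+\frac{16}{m-3}.$$
   Context: $\lambda(G)$ denotes the spectral radius of the adjacency matrix of $G$. $T_{p,2}$ is the complete bipartite graph on $p$ vertices with parts of sizes $\lfloor p/2\rfloor$ and $\lceil p/2\rceil$. $C_3(T_{m-2,2})$ is the $m$-vertex graph obtained by identifying one vertex of a triangle with one vertex of $T_{m-2,2}$ lying in the part of size $\lfloor (m-2)/2\rfloor$. *)

theory Defs
  imports Complex_Main "Jordan_Normal_Form.Spectral_Radius"
begin

text \<open>A simple graph on vertex set {0..<n} is given by a symmetric irreflexive
  edge predicate. Its adjacency matrix (over the complex numbers, so that the
  library notion of spectral radius applies):\<close>
definition adj_mat :: "nat \<Rightarrow> (nat \<Rightarrow> nat \<Rightarrow> bool) \<Rightarrow> complex mat" where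
  "adj_mat n E = mat n n (\<lambda>(i, j). if E i j then 1 else 0)"

definition graph_spectral_radius :: "nat \<Rightarrow> (nat \<Rightarrow> nat \<Rightarrow> bool) \<Rightarrow> real" where
  "graph_spectral_radius n E = spectral_radius (adj_mat n E)"

definition T2_edge :: "nat \<Rightarrow> nat \<Rightarrow> nat \<Rightarrow> bool" where
  "T2_edge p i j = ((i < p div 2 \<and> p div 2 \<le> j \<and> j < p) \<or> (j < p div 2 \<and> p div 2 \<le> i \<and> i < p))"

text \<open>C_3(T_{m-2,2}) on {0..<m}: the graph T_{m-2,2} on {0..<m-2}, plus a triangle
  on vertices 0, m-2, m-1, where vertex 0 lies in the part of size floor((m-2)/2).\<close>
definition C3T_edge :: "nat \<Rightarrow> nat \<Rightarrow> nat \<Rightarrow> bool" where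
  "C3T_edge m i j =
     (T2_edge (m - 2) i j
      \<or> (i = 0 \<and> (j = m - 2 \<or> j = m - 1))
      \<or> (j = 0 \<and> (i = m - 2 \<or> i = m - 1))
      \<or> (i = m - 2 \<and> j = m - 1) \<or> (i = m - 1 \<and> j = m - 2))"

end

theory Submission imports Defs begin

text \<open>A positive weight vector whose weighted neighbour sums are at most \<open>\<rho>\<close> times its own
  entries bounds the spectral radius by \<open>\<rho>\<close> (Collatz--Wielandt). For
  \<open>C\<^sub>3(T\<^sub>m\<^sub>-\<^sub>2\<^sub>,\<^sub>2)\<close> with \<open>p = m - 2\<close> the weights are: \<open>1\<close> on the small part \<open>A\<close> minus the
  apex, \<open>r/|B|\<close> on the large part \<open>B\<close>, \<open>1 + 4/r\<^sup>2\<close> on the apex and \<open>(1 + 4/r\<^sup>2)/(r - 1)\<close> on the two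
  remaining triangle vertices, where \<open>r = p/2 + 8/(p - 1)\<close>. The inequalities are then exact at
  the small part and the triangle; at the apex they need only \<open>r \<ge> 4\<close>, and at \<open>B\<close> they follow from
  \<open>|A| |B| \<le> p\<^sup>2/4\<close> and \<open>r\<^sup>2 \<ge> p\<^sup>2/4 + 8\<close>. Finally \<open>r < (m - 2)/2 + 16/(m - 3)\<close>.\<close>

lemma adj_mat_mult_vec_nth:
  assumes "i < n" and "v \<in> carrier_vec n"
  shows "(adj_mat n E *\<^sub>v v) $ i = (\<Sum>j | j < n \<and> E i j. v $ j)"
proof -
  have "(adj_mat n E *\<^sub>v v) $ i = (\<Sum>j<n. if E i j then v $ j else 0)"
    using assms by (auto simp: adj_mat_def scalar_prod_def lessThan_atLeast0 intro: sum.cong)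
  also have "\<dots> = (\<Sum>j | j < n \<and> E i j. v $ j)"
    by (simp add: sum.inter_filter[symmetric] lessThan_def conj_commute)
  finally show ?thesis .
qed

lemma eigenvalue_norm_le_weighted_row_sum:
  fixes x :: "nat \<Rightarrow> real"
  assumes ev: "eigenvector (adj_mat n E) v k"
    and pos: "\<And>i. i < n \<Longrightarrow> 0 < x i"
    and rows: "\<And>i. i < n \<Longrightarrow> (\<Sum>j | j < n \<and> E i j. x j) \<le> \<rho> * x i"
  shows "norm k \<le> \<rho>"
proof -
  have "adj_mat n E \<in> carrier_mat n n" by (simp add: adj_mat_def)
  with ev have v: "v \<in> carrier_vec n" and "v \<noteq> 0\<^sub>v n" and Av: "adj_mat n E *\<^sub>v v = k \<cdot>\<^sub>v v"
    by (auto simp: eigenvector_def)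
  then obtain j0 where j0: "j0 < n" "v $ j0 \<noteq> 0"
    by (metis eq_vecI carrier_vecD index_zero_vec)
  define f where "f j = norm (v $ j) / x j" for j
  \<comment> \<open>compare at a vertex where \<open>|v|/x\<close> is maximal\<close>
  obtain i where i: "i < n" and i_max: "\<And>j. j < n \<Longrightarrow> f j \<le> f i"
  proof -
    have fin: "finite (f ` {..<n})" by simp
    have "Max (f ` {..<n}) \<in> f ` {..<n}"
      using j0 by (intro Max_in) auto
    then obtain i where "i < n" "f i = Max (f ` {..<n})" by auto
    with fin show ?thesis
      using that by (metis Max_ge image_eqI lessThan_iff)
  qed
  have "0 < f j0" using j0 pos by (simp add: f_def)
  with i_max j0 have fi_pos: "0 < f i" by fastforce
  have "norm k * norm (v $ i) = norm ((adj_mat n E *\<^sub>v v) $ i)"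
    using Av i v by (simp add: norm_mult)
  also have "\<dots> \<le> (\<Sum>j | j < n \<and> E i j. norm (v $ j))"
    using i v by (simp add: adj_mat_mult_vec_nth norm_sum)
  also have "\<dots> \<le> (\<Sum>j | j < n \<and> E i j. f i * x j)"
    using i_max pos by (intro sum_mono) (auto simp: f_def divide_le_eq)
  also have "\<dots> \<le> f i * (\<rho> * x i)"
    using rows[OF i] fi_pos by (simp add: sum_distrib_left[symmetric])
  finally have "norm k * (f i * x i) \<le> \<rho> * (f i * x i)"
    using pos[OF i] by (simp add: f_def ac_simps)
  then show ?thesis
    using fi_pos pos[OF i] by (simp add: mult_le_cancel_right_pos)
qed

lemma spectral_radius_adj_mat_le:
  fixes x :: "nat \<Rightarrow> real"
  assumes "0 < n"
    and "\<And>i. i < n \<Longrightarrow> 0 < x i"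
    and "\<And>i. i < n \<Longrightarrow> (\<Sum>j | j < n \<and> E i j. x j) \<le> \<rho> * x i"
  shows "graph_spectral_radius n E \<le> \<rho>"
proof -
  have "adj_mat n E \<in> carrier_mat n n" by (simp add: adj_mat_def)
  from spectral_radius_mem_max(1)[OF this \<open>0 < n\<close>] obtain k
    where "k \<in> spectrum (adj_mat n E)" and radius: "spectral_radius (adj_mat n E) = norm k"
    by blast
  then obtain v where "eigenvector (adj_mat n E) v k"
    by (auto simp: spectrum_def eigenvalue_def)
  then have "norm k \<le> \<rho>"
    using assms(2,3) by (rule eigenvalue_norm_le_weighted_row_sum)
  then show ?thesis
    by (simp add: graph_spectral_radius_def radius)
qed

lemma apex_row_ineq:
  fixes r :: real
  assumes "4 \<le> r"
  shows "r + 2 * ((1 + 4 / r\<^sup>2) / (r - 1)) \<le> r * (1 + 4 / r\<^sup>2)"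
proof -
  have "4 * r \<le> r * r"
    using assms by (intro mult_right_mono) auto
  moreover have "2 * r * (r - 1) - (r\<^sup>2 + 4) = r * r - 2 * r - 4"
    by (simp add: power2_eq_square algebra_simps)
  ultimately have "r\<^sup>2 + 4 \<le> 2 * r * (r - 1)"
    using assms by linarith
  then have "r * (r\<^sup>2 + 4) \<le> r * (2 * r * (r - 1))"
    using assms by (intro mult_left_mono) auto
  then have "2 * ((1 + 4 / r\<^sup>2) / (r - 1)) \<le> 4 / r"
    using assms by (simp add: field_simps power2_eq_square ring_distribs)
  moreover have "r * (1 + 4 / r\<^sup>2) = r + 4 / r"
    using assms by (simp add: field_simps power2_eq_square)
  ultimately show ?thesis by simp
qed

lemma large_part_row_ineq:
  fixes a b r :: real
  assumes "0 \<le> a" and "0 < b" and r: "(a + b)\<^sup>2 / 4 + 8 \<le> r\<^sup>2"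
  shows "(1 + 4 / r\<^sup>2) + (a - 1) \<le> r * (r / b)"
proof -
  have amgm: "a * b \<le> (a + b)\<^sup>2 / 4"
    using sum_squares_ge_zero[of "a - b" 0] by (simp add: power2_eq_square algebra_simps)
  have "b * b \<le> (a + b)\<^sup>2"
    using assms by (simp add: power2_eq_square mult_mono)
  moreover have "2 * b \<le> b * b + 1"
    using zero_le_power2[of "b - 1"] by (simp add: power2_eq_square algebra_simps)
  ultimately have "b \<le> 2 * r\<^sup>2"
    using r by linarith
  moreover have "0 < r\<^sup>2"
    using r zero_le_power2[of "a + b"] by linarith
  ultimately have "b * (4 / r\<^sup>2) \<le> 8"
    by (simp add: field_simps)
  with amgm r have "b * (a + 4 / r\<^sup>2) \<le> r\<^sup>2"
    by (simp add: algebra_simps)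
  then show ?thesis
    using \<open>0 < b\<close> by (simp add: field_simps power2_eq_square)
qed

definition C3T_rho :: "nat \<Rightarrow> real" where
  "C3T_rho p = real p / 2 + 8 / (real p - 1)"

definition C3T_apex_weight :: "nat \<Rightarrow> real" where
  "C3T_apex_weight p = 1 + 4 / (C3T_rho p)\<^sup>2"

definition C3T_weight :: "nat \<Rightarrow> nat \<Rightarrow> real" where
  "C3T_weight p j =
     (if j = 0 then C3T_apex_weight p
      else if j < p div 2 then 1
      else if j < p then C3T_rho p / real (p - p div 2)
      else C3T_apex_weight p / (C3T_rho p - 1))"

lemma C3T_rho_ge:
  assumes "2 \<le> p"
  shows "9 / 2 \<le> C3T_rho p"
proof -
  have "C3T_rho p - 9 / 2 = (real p - 5)\<^sup>2 / (2 * (real p - 1))"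
    using assms by (simp add: C3T_rho_def field_simps power2_eq_square)
  also have "\<dots> \<ge> 0"
    using assms by simp
  finally show ?thesis by simp
qed

lemma C3T_rho_sq_ge:
  assumes "2 \<le> p"
  shows "(real p)\<^sup>2 / 4 + 8 \<le> (C3T_rho p)\<^sup>2"
proof -
  have "8 \<le> real p * (8 / (real p - 1))"
    using assms by (simp add: field_simps)
  moreover have "(C3T_rho p)\<^sup>2 = (real p)\<^sup>2 / 4 + real p * (8 / (real p - 1)) + (8 / (real p - 1))\<^sup>2"
    by (simp add: C3T_rho_def power2_eq_square algebra_simps)
  ultimately show ?thesis
    using zero_le_power2[of "8 / (real p - 1)"] by linarith
qed

lemma C3T_weight_pos:
  assumes "2 \<le> p"
  shows "0 < C3T_weight p j"
proof -
  have "0 < C3T_apex_weight p"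
    by (simp add: C3T_apex_weight_def add_pos_nonneg)
  moreover have "0 < p - p div 2"
    using assms by simp
  ultimately show ?thesis
    using C3T_rho_ge[OF assms] by (simp add: C3T_weight_def)
qed

lemma sum_C3T_weight_large_part:
  assumes "2 \<le> p"
  shows "(\<Sum>j\<in>{p div 2..<p}. C3T_weight p j) = C3T_rho p"
proof -
  have "(\<Sum>j\<in>{p div 2..<p}. C3T_weight p j) = (\<Sum>j\<in>{p div 2..<p}. C3T_rho p / real (p - p div 2))"
    using assms by (intro sum.cong) (auto simp: C3T_weight_def)
  also have "\<dots> = C3T_rho p"
    using assms by simp
  finally show ?thesis .
qed

lemma sum_C3T_weight_small_part:
  assumes "2 \<le> p"
  shows "(\<Sum>j\<in>{0..<p div 2}. C3T_weight p j) = C3T_apex_weight p + (real (p div 2) - 1)"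
proof -
  have "(\<Sum>j\<in>{0..<p div 2}. C3T_weight p j) = C3T_weight p 0 + (\<Sum>j\<in>{1..<p div 2}. 1)"
    using assms by (simp add: sum.atLeast_Suc_lessThan C3T_weight_def)
  then show ?thesis
    using assms by (simp add: C3T_weight_def)
qed

lemma C3T_edge_iff:
  assumes "m = p + 2" and "a = p div 2"
  shows "C3T_edge m i j \<longleftrightarrow>
    (i < a \<and> a \<le> j \<and> j < p) \<or> (j < a \<and> a \<le> i \<and> i < p)
    \<or> (i = 0 \<and> (j = p \<or> j = p + 1)) \<or> (j = 0 \<and> (i = p \<or> i = p + 1))
    \<or> (i = p \<and> j = p + 1) \<or> (i = p + 1 \<and> j = p)"
  using assms by (auto simp: C3T_edge_def T2_edge_def)

lemma C3T_weight_row_sum_le: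
  assumes "2 \<le> p" and "i < p + 2"
  shows "(\<Sum>j | j < p + 2 \<and> C3T_edge (p + 2) i j. C3T_weight p j) \<le> C3T_rho p * C3T_weight p i"
proof -
  let ?a = "p div 2" and ?r = "C3T_rho p" and ?z = "C3T_apex_weight p"
  let ?N = "{j. j < p + 2 \<and> C3T_edge (p + 2) i j}"
  note edge = C3T_edge_iff[OF refl refl, of p]
  have a_pos: "0 < ?a" and a_lt: "?a < p"
    using assms by simp_all
  have r: "9 / 2 \<le> ?r"
    using C3T_rho_ge[OF assms(1)] .
  have triangle: "?z + ?z / (?r - 1) = ?r * (?z / (?r - 1))"
    using r by (simp add: field_simps)
  consider "i = 0" | "0 < i" "i < ?a" | "?a \<le> i" "i < p" | "i = p" | "i = p + 1"
    using assms by linarith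
  then show ?thesis
  proof cases
    case 1
    then have "?N = {?a..<p} \<union> {p, p + 1}"
      unfolding edge using assms by auto
    then have "sum (C3T_weight p) ?N = sum (C3T_weight p) {?a..<p} + C3T_weight p p + C3T_weight p (p + 1)"
      by (simp add: sum.union_disjoint)
    also have "\<dots> = ?r + 2 * (?z / (?r - 1))"
      using assms by (simp add: sum_C3T_weight_large_part) (auto simp: C3T_weight_def)
    finally show ?thesis
      using 1 apex_row_ineq[of ?r] r by (simp add: C3T_weight_def C3T_apex_weight_def)
  next
    case 2
    then have "?N = {?a..<p}"
      unfolding edge using assms by auto
    then show ?thesis
      using 2 assms by (simp add: sum_C3T_weight_large_part) (simp add: C3T_weight_def)
  next
    case 3
    have "?N = {0..<?a}"
      unfolding edge using 3 assms by auto
    then have "sum (C3T_weight p) ?N = ?z + (real ?a - 1)"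
      using assms by (simp add: sum_C3T_weight_small_part)
    also have "\<dots> \<le> ?r * (?r / real (p - ?a))"
    proof -
      have "real ?a + real (p - ?a) = real p"
        using a_lt by simp
      then show ?thesis
        unfolding C3T_apex_weight_def using a_lt C3T_rho_sq_ge[OF assms(1)]
        by (intro large_part_row_ineq) auto
    qed
    also have "?r / real (p - ?a) = C3T_weight p i"
      using 3 a_pos by (simp add: C3T_weight_def)
    finally show ?thesis .
  next
    case 4
    then have "?N = {0, p + 1}"
      unfolding edge using assms by auto
    then show ?thesis
      using 4 a_lt triangle by (simp add: C3T_weight_def)
  next
    case 5
    then have "?N = {0, p}"
      unfolding edge using assms by auto
    then show ?thesis
      using 5 a_lt triangle by (simp add: C3T_weight_def)
  qed
qed

theorem lemmaA3:
  fixes m :: nat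
  assumes "m \<ge> 4"
  shows "graph_spectral_radius m (C3T_edge m)
           < (real m - 2) / 2 + 32 / (real m - 3)^2 + 16 / (real m - 3)"
proof -
  define p where "p = m - 2"
  have p: "2 \<le> p" and m: "m = p + 2"
    using assms by (simp_all add: p_def)
  have "graph_spectral_radius m (C3T_edge m) \<le> C3T_rho p"
    unfolding m using p
    by (intro spectral_radius_adj_mat_le[where x = "C3T_weight p"] C3T_weight_pos C3T_weight_row_sum_le) auto
  also have "\<dots> < (real m - 2) / 2 + 32 / (real m - 3)^2 + 16 / (real m - 3)"
  proof -
    have p_eq: "real p / 2 = (real m - 2) / 2" "real p - 1 = real m - 3"
      using m by simp_all
    have "0 < real m - 3"
      using assms by simp
    then have "8 / (real m - 3) < 16 / (real m - 3)" and "0 < 32 / (real m - 3)^2"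
      by (simp_all add: divide_strict_right_mono)
    then show ?thesis
      unfolding C3T_rho_def p_eq by linarith
  qed
  finally show ?thesis .
qed

end
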